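(* Let $\|\cdot\|$ be a URTC-norm on $\mathbb{R}^2$ with unit sphere $S$. Define $f\colon S\to S$ by letting $f(z)$ be the unique point of $S$ such that $\|z-f(z)\|=1$ and the triangle $(0,z,f(z))$ is positively oriented. Then $f$ is continuous.
   Context: A norm $\|\cdot\|$ on $\mathbb{R}^2$ is called a URTC-norm if for every $a,b\in\mathbb{R}^2$ with $\|a-b\|=1$ the system $\|a-x\|=1$, $\|b-x\|=1$ is satisfied by exactly two points $x\in\mathbb{R}^2$ (for $a=0$, $b=z\in S$ these two points lie on opposite sides of the line through $0$ and $z$, so $f$ is well defined). $S=\{x:\|x\|=1\}$. A triangle $(p,q,r)$ is positively oriented if its vertices are in counterclockwise order. *)

theory Defs
  imports "HOL-Analysis.Analysis"
begin

definition is_norm2 :: "(real \<times> real \<Rightarrow> real) \<Rightarrow> bool" where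
  "is_norm2 N \<longleftrightarrow>
     (\<forall>x. N x = 0 \<longleftrightarrow> x = 0) \<and>
     (\<forall>c x. N (c *\<^sub>R x) = \<bar>c\<bar> * N x) \<and>
     (\<forall>x y. N (x + y) \<le> N x + N y)"

definition urtc_norm :: "(real \<times> real \<Rightarrow> real) \<Rightarrow> bool" where
  "urtc_norm N \<longleftrightarrow> is_norm2 N \<and>
     (\<forall>a b. N (a - b) = 1 \<longrightarrow> card {x. N (a - x) = 1 \<and> N (b - x) = 1} = 2)"

definition unit_sphere :: "(real \<times> real \<Rightarrow> real) \<Rightarrow> (real \<times> real) set" where
  "unit_sphere N = {x. N x = 1}"

definition pos_oriented :: "real \<times> real \<Rightarrow> real \<times> real \<Rightarrow> real \<times> real \<Rightarrow> bool" where
  "pos_oriented p q r \<longleftrightarrow>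
     (fst q - fst p) * (snd r - snd p) - (snd q - snd p) * (fst r - fst p) > 0"

definition urtc_f :: "(real \<times> real \<Rightarrow> real) \<Rightarrow> real \<times> real \<Rightarrow> real \<times> real" where
  "urtc_f N z = (THE w. w \<in> unit_sphere N \<and> N (z - w) = 1 \<and> pos_oriented 0 z w)"

end

theory Submission
  imports Defs
begin

text \<open>
  For a unit vector \<open>z\<close>, the points at distance 1 from both \<open>0\<close> and \<open>z\<close> are exactly
  \<open>w\<close> and \<open>z - w\<close> for any one of them, and none is collinear with \<open>z\<close> (that would force
  \<open>w = t z\<close> with \<open>|t| = |1 - t| = 1\<close>). As \<open>det(z, z - w) = - det(z, w)\<close>, exactly one of
  the two is positively oriented, so the graph of \<open>f\<close> is the set of pairs \<open>(z, w)\<close> with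
  \<open>N z = N w = N (z - w) = 1\<close> and \<open>det(z, w) \<ge> 0\<close>; the weak inequality changes nothing
  because the determinant never vanishes there, but it makes the set visibly closed, a norm
  being convex and hence continuous. Since \<open>f\<close> maps into the compact unit sphere, the
  closed graph theorem gives continuity.
\<close>

definition det2 :: "real \<times> real \<Rightarrow> real \<times> real \<Rightarrow> real" where
  "det2 z w = fst z * snd w - snd z * fst w"

definition positive_unit_triangles ::
    "(real \<times> real \<Rightarrow> real) \<Rightarrow> ((real \<times> real) \<times> (real \<times> real)) set" where
  "positive_unit_triangles N =
    {p. N (fst p) = 1 \<and> N (snd p) = 1 \<and> N (fst p - snd p) = 1 \<and> det2 (fst p) (snd p) \<ge> 0}"

lemma pos_oriented_0_iff: "pos_oriented 0 z w \<longleftrightarrow> det2 z w > 0"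
  by (simp add: pos_oriented_def det2_def)

lemma det2_diff_right: "det2 z (z - w) = - det2 z w"
  by (simp add: det2_def algebra_simps)

lemma det2_eq_0_imp_collinear:
  assumes "det2 z x = 0" "z \<noteq> 0"
  shows "\<exists>t. x = t *\<^sub>R z"
proof -
  have "fst z ^ 2 + snd z ^ 2 \<noteq> 0" using assms(2) by (simp add: prod_eq_iff)
  then have "x = ((fst z * fst x + snd z * snd x) / (fst z ^ 2 + snd z ^ 2)) *\<^sub>R z"
    using assms(1) by (simp add: det2_def prod_eq_iff field_simps power2_eq_square)
  then show ?thesis ..
qed

context
  fixes N :: "real \<times> real \<Rightarrow> real"
  assumes norm2: "is_norm2 N"
begin

lemma is_norm2_eq_0_iff: "N x = 0 \<longleftrightarrow> x = 0"
  using norm2 unfolding is_norm2_def by blast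

lemma is_norm2_scaleR: "N (c *\<^sub>R x) = \<bar>c\<bar> * N x"
  using norm2 unfolding is_norm2_def by blast

lemma is_norm2_triangle: "N (x + y) \<le> N x + N y"
  using norm2 unfolding is_norm2_def by blast

lemma is_norm2_minus: "N (- x) = N x"
  using is_norm2_scaleR[of "-1" x] by simp

lemma is_norm2_nonneg: "N x \<ge> 0"
  using is_norm2_triangle[of x "- x"] is_norm2_minus[of x] is_norm2_eq_0_iff[of 0] by simp

lemma is_norm2_convex: "convex_on UNIV N"
proof (rule convex_onI)
  fix t :: real and x y
  assume "0 < t" "t < 1"
  then show "N ((1 - t) *\<^sub>R x + t *\<^sub>R y) \<le> (1 - t) * N x + t * N y"
    using is_norm2_triangle is_norm2_scaleR by (metis abs_of_pos diff_gt_0_iff_gt)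
qed simp

lemma is_norm2_continuous: "continuous_on UNIV N"
  by (rule convex_on_continuous[OF open_UNIV is_norm2_convex])

lemma is_norm2_ge_norm: "\<exists>m>0. \<forall>x. m * norm x \<le> N x"
proof -
  have "(1, 0) \<in> sphere (0 :: real \<times> real) 1" by (simp add: norm_Pair)
  then obtain x0 where x0: "x0 \<in> sphere 0 1" "\<And>y. y \<in> sphere 0 1 \<Longrightarrow> N x0 \<le> N y"
    using continuous_attains_inf[OF compact_sphere _
        continuous_on_subset[OF is_norm2_continuous subset_UNIV]] by blast
  have "N x0 > 0"
    using x0(1) is_norm2_eq_0_iff[of x0] is_norm2_nonneg[of x0] by force
  moreover have "N x0 * norm x \<le> N x" for x
  proof (cases "x = 0")
    case True
    then show ?thesis using is_norm2_nonneg[of x] by simp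
  next
    case False
    then have "N x0 \<le> N ((1 / norm x) *\<^sub>R x)" using x0(2) by simp
    also have "\<dots> = N x / norm x" by (simp add: is_norm2_scaleR)
    finally show ?thesis using False by (simp add: pos_le_divide_eq)
  qed
  ultimately show ?thesis by blast
qed

lemma compact_unit_sphere: "compact (unit_sphere N)"
proof -
  obtain m where m: "m > 0" "\<And>x. m * norm x \<le> N x" using is_norm2_ge_norm by blast
  have "bounded (unit_sphere N)"
    unfolding bounded_iff unit_sphere_def
  proof (intro exI ballI)
    fix x assume "x \<in> {x. N x = 1}"
    then show "norm x \<le> 1 / m" using m(1) m(2)[of x] by (simp add: field_simps)
  qed
  moreover have "closed (unit_sphere N)"
    unfolding unit_sphere_def by (intro closed_Collect_eq is_norm2_continuous continuous_on_const)
  ultimately show ?thesis by (simp add: compact_eq_bounded_closed)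
qed

lemma unit_triangle_det2_nonzero:
  assumes "N z = 1" "N x = 1" "N (z - x) = 1"
  shows "det2 z x \<noteq> 0"
proof
  assume "det2 z x = 0"
  moreover have "z \<noteq> 0" using assms(1) is_norm2_eq_0_iff[of z] by force
  ultimately obtain t where t: "x = t *\<^sub>R z" using det2_eq_0_imp_collinear by blast
  have "z - x = (1 - t) *\<^sub>R z" using t by (simp add: algebra_simps)
  then have "\<bar>t\<bar> = 1" "\<bar>1 - t\<bar> = 1"
    using assms t is_norm2_scaleR[of t z] is_norm2_scaleR[of "1 - t" z] by simp_all
  then show False by linarith
qed

end

context
  fixes N :: "real \<times> real \<Rightarrow> real"
  assumes U: "urtc_norm N"
begin

lemma urtc_is_norm2: "is_norm2 N"
  using U unfolding urtc_norm_def by blast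

lemma urtc_card_common_unit_neighbours:
  assumes "N z = 1"
  shows "card {y. N (z - y) = 1 \<and> N (0 - y) = 1} = 2"
proof -
  have "\<forall>a b. N (a - b) = 1 \<longrightarrow> card {x. N (a - x) = 1 \<and> N (b - x) = 1} = 2"
    using U unfolding urtc_norm_def by (rule conjunct2)
  moreover have "N (z - 0) = 1" using assms by simp
  ultimately show ?thesis by blast
qed

lemma urtc_common_unit_neighbours:
  assumes "N z = 1" "N x = 1" "N (z - x) = 1"
  shows "{y. N (z - y) = 1 \<and> N (0 - y) = 1} = {x, z - x}"
proof -
  let ?C = "{y. N (z - y) = 1 \<and> N (0 - y) = 1}"
  have card: "card ?C = 2" using urtc_card_common_unit_neighbours[OF assms(1)] .
  then have "finite ?C" by (metis card.infinite zero_neq_numeral)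
  moreover have "{x, z - x} \<subseteq> ?C"
    using assms is_norm2_minus[OF urtc_is_norm2] by simp
  moreover have "card {x, z - x} = 2"
  proof -
    have "det2 z (z - x) \<noteq> det2 z x"
      using unit_triangle_det2_nonzero[OF urtc_is_norm2 assms] det2_diff_right[of z x] by linarith
    then have "x \<noteq> z - x" by metis
    then show ?thesis by simp
  qed
  ultimately have "{x, z - x} = ?C" using card by (intro card_subset_eq) simp_all
  then show ?thesis by (rule sym)
qed

lemma urtc_positive_partner_unique:
  assumes "N z = 1" "N x = 1" "N (z - x) = 1" "det2 z x > 0"
    and "N y = 1" "N (z - y) = 1" "det2 z y > 0"
  shows "y = x"
proof -
  have "y \<in> {y. N (z - y) = 1 \<and> N (0 - y) = 1}"
    using assms(5,6) is_norm2_minus[OF urtc_is_norm2] by simp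
  then have "y = x \<or> y = z - x"
    using urtc_common_unit_neighbours[OF assms(1-3)] by blast
  then show ?thesis using assms(4,7) det2_diff_right[of z x] by auto
qed

lemma urtc_positive_partner_exists:
  assumes "N z = 1"
  shows "\<exists>w. N w = 1 \<and> N (z - w) = 1 \<and> det2 z w > 0"
proof -
  obtain x where x: "N (z - x) = 1" "N (0 - x) = 1"
    using urtc_card_common_unit_neighbours[OF assms]
    by (metis (mono_tags, lifting) card.empty empty_Collect_eq zero_neq_numeral)
  then have "N x = 1" using is_norm2_minus[OF urtc_is_norm2, of x] by simp
  moreover have "det2 z x \<noteq> 0"
    using unit_triangle_det2_nonzero[OF urtc_is_norm2 assms \<open>N x = 1\<close> x(1)] .
  ultimately consider "det2 z x > 0" | "det2 z (z - x) > 0"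
    using det2_diff_right[of z x] by linarith
  then show ?thesis
  proof cases
    case 1
    then show ?thesis using x(1) \<open>N x = 1\<close> by blast
  next
    case 2
    then show ?thesis using x(1) \<open>N x = 1\<close> by (intro exI[of _ "z - x"]) simp
  qed
qed

lemma urtc_f_eqI:
  assumes "N z = 1" "N w = 1" "N (z - w) = 1" "det2 z w > 0"
  shows "urtc_f N z = w"
  unfolding urtc_f_def unit_sphere_def pos_oriented_0_iff
proof (rule the_equality)
  show "w \<in> {x. N x = 1} \<and> N (z - w) = 1 \<and> 0 < det2 z w" using assms by simp
  show "y = w" if "y \<in> {x. N x = 1} \<and> N (z - y) = 1 \<and> 0 < det2 z y" for y
    using that urtc_positive_partner_unique[OF assms, of y] by simp
qed

lemma urtc_f_unit_triangle:
  assumes "N z = 1"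
  shows "N (urtc_f N z) = 1" "N (z - urtc_f N z) = 1" "det2 z (urtc_f N z) > 0"
  using urtc_positive_partner_exists[OF assms] urtc_f_eqI[OF assms] by auto

lemma urtc_f_graph:
  "(\<lambda>z. (z, urtc_f N z)) ` unit_sphere N = positive_unit_triangles N"
proof (intro set_eqI iffI)
  fix p assume "p \<in> (\<lambda>z. (z, urtc_f N z)) ` unit_sphere N"
  then obtain z where "N z = 1" "p = (z, urtc_f N z)" unfolding unit_sphere_def by blast
  then show "p \<in> positive_unit_triangles N"
    using urtc_f_unit_triangle[of z] by (simp add: positive_unit_triangles_def less_imp_le)
next
  fix p assume "p \<in> positive_unit_triangles N"
  moreover obtain z w where p: "p = (z, w)" by (cases p)
  ultimately have zw: "N z = 1" "N w = 1" "N (z - w) = 1" "det2 z w \<ge> 0"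
    by (simp_all add: positive_unit_triangles_def)
  then have "det2 z w > 0"
    using unit_triangle_det2_nonzero[OF urtc_is_norm2 zw(1-3)] by linarith
  then have "p = (z, urtc_f N z)" using p urtc_f_eqI zw by simp
  then show "p \<in> (\<lambda>z. (z, urtc_f N z)) ` unit_sphere N"
    using zw(1) unfolding unit_sphere_def by blast
qed

end

lemma closed_positive_unit_triangles:
  assumes "is_norm2 N"
  shows "closed (positive_unit_triangles N)"
proof -
  have N_comp: "continuous_on UNIV (\<lambda>p. N (g p))" if "continuous_on UNIV g" for g :: "(real \<times> real) \<times> (real \<times> real) \<Rightarrow> real \<times> real"
    using continuous_on_compose2[OF is_norm2_continuous[OF assms] that] by simp
  have "continuous_on UNIV (\<lambda>p :: (real \<times> real) \<times> (real \<times> real). det2 (fst p) (snd p))"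
    unfolding det2_def by (intro continuous_intros)
  moreover have "continuous_on UNIV (\<lambda>p :: (real \<times> real) \<times> (real \<times> real). fst p - snd p)"
    by (intro continuous_intros)
  ultimately show ?thesis
    unfolding positive_unit_triangles_def Collect_conj_eq
    by (intro closed_Int closed_Collect_eq closed_Collect_le N_comp continuous_on_fst continuous_on_snd
        continuous_on_id continuous_on_const)
qed

theorem lemma3:
  fixes N :: "real \<times> real \<Rightarrow> real"
  assumes "urtc_norm N"
  shows "continuous_on (unit_sphere N) (urtc_f N)"
proof (rule continuous_from_closed_graph)
  show "compact (unit_sphere N)"
    using compact_unit_sphere[OF urtc_is_norm2[OF assms]] .
  show "urtc_f N \<in> unit_sphere N \<rightarrow> unit_sphere N"
    using urtc_f_unit_triangle(1)[OF assms] unfolding unit_sphere_def by blast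
  show "closed ((\<lambda>z. (z, urtc_f N z)) ` unit_sphere N)"
    unfolding urtc_f_graph[OF assms]
    using closed_positive_unit_triangles[OF urtc_is_norm2[OF assms]] .
qed

end
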